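(* Let $S\subset[m]$ and $w\in\Lambda_S$, and let $JF(w)=\big(\frac{\partial F_i}{\partial v_j}(w)\big)_{i,j}$ be the $m\times m$ Jacobian of $F$ at $w$ (computed from the formula for $F$). Then all eigenvalues of $JF(w)$ other than the numbers $\frac{\partial L}{\partial v_i}(w)$, $i\notin S$, are real and nonpositive; more precisely, the spectrum of $JF(w)$ is $\{\frac{\partial L}{\partial v_i}(w): i\notin S\}$ together with the spectrum of a matrix that is self-adjoint for a suitable inner product and negative semidefinite. In particular $JF(w)$ has a real positive eigenvalue if and only if there is $i\in[m]$ with $w_i=0$ and $\frac{\partial L}{\partial v_i}(w)>0$.
   Context: $H=(V,E)$ is a finite hypergraph with $V=[m]$, $|E|=N\ge1$, hyperedges nonempty subsets of $[m]$, each vertex in at least one hyperedge. For $v\in\mathbb R^m$ and $I\in E$, $v_I=\sum_{i\in I}v_i$. Fix $0<c<1/N$, $\Delta=\{x\in\mathbb R^m: x_i\ge0,\ \sum_i x_i=1,\ x_I\ge c\ \forall I\in E\}$. $L(v)=-\sum_i v_i+\frac1N\sum_{I\in E}\log v_I$ and $F_i(v)=-v_i+\frac1N\sum_{I\ni i}\frac{v_i}{v_I}=v_i\frac{\partial L}{\partial v_i}(v)$. For $S\subset[m]$, $\Delta_S=\{v\in\Delta: v_i=0\iff i\notin S\}$ and $\Lambda_S=\{v\in\Delta_S:\frac{\partial L}{\partial v_i}(v)=0\ \forall i\in S\}$. *)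

theory Defs
  imports "HOL-Analysis.Analysis" "Jordan_Normal_Form.Spectral_Radius"
begin

text \<open>Vertices are 0..m-1 (standing for [m]); vectors in R^m are functions nat => real.\<close>

definition vsum :: "(nat \<Rightarrow> real) \<Rightarrow> nat set \<Rightarrow> real" where
  "vsum v I = (\<Sum>i\<in>I. v i)"

definition Lfun :: "nat \<Rightarrow> nat set set \<Rightarrow> (nat \<Rightarrow> real) \<Rightarrow> real" where
  "Lfun m E v = - (\<Sum>i<m. v i) + (1 / real (card E)) * (\<Sum>I\<in>E. ln (vsum v I))"

definition Ffun :: "nat \<Rightarrow> nat set set \<Rightarrow> nat \<Rightarrow> (nat \<Rightarrow> real) \<Rightarrow> real" where
  "Ffun m E i v = - v i + (1 / real (card E)) * (\<Sum>I\<in>{I\<in>E. i \<in> I}. v i / vsum v I)"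

definition unitv :: "nat \<Rightarrow> nat \<Rightarrow> real" where
  "unitv j = (\<lambda>k. if k = j then 1 else 0)"

definition pderiv_at :: "((nat \<Rightarrow> real) \<Rightarrow> real) \<Rightarrow> nat \<Rightarrow> (nat \<Rightarrow> real) \<Rightarrow> real" where
  "pderiv_at f j v = deriv (\<lambda>t. f (\<lambda>k. v k + t * unitv j k)) 0"

definition dL :: "nat \<Rightarrow> nat set set \<Rightarrow> nat \<Rightarrow> (nat \<Rightarrow> real) \<Rightarrow> real" where
  "dL m E i v = pderiv_at (Lfun m E) i v"

definition Delta :: "nat \<Rightarrow> nat set set \<Rightarrow> real \<Rightarrow> (nat \<Rightarrow> real) set" where
  "Delta m E c = {x. (\<forall>i<m. 0 \<le> x i) \<and> (\<forall>i\<ge>m. x i = 0) \<and> (\<Sum>i<m. x i) = 1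
                     \<and> (\<forall>I\<in>E. c \<le> vsum x I)}"

definition Delta_S :: "nat \<Rightarrow> nat set set \<Rightarrow> real \<Rightarrow> nat set \<Rightarrow> (nat \<Rightarrow> real) set" where
  "Delta_S m E c S = {v \<in> Delta m E c. \<forall>i<m. (v i = 0 \<longleftrightarrow> i \<notin> S)}"

definition Lambda_S :: "nat \<Rightarrow> nat set set \<Rightarrow> real \<Rightarrow> nat set \<Rightarrow> (nat \<Rightarrow> real) set" where
  "Lambda_S m E c S = {v \<in> Delta_S m E c S. \<forall>i\<in>S. dL m E i v = 0}"

definition JF :: "nat \<Rightarrow> nat set set \<Rightarrow> (nat \<Rightarrow> real) \<Rightarrow> real mat" where
  "JF m E w = mat m m (\<lambda>(i, j). pderiv_at (Ffun m E i) j w)"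

definition ip_mat :: "real mat \<Rightarrow> real vec \<Rightarrow> real vec \<Rightarrow> real" where
  "ip_mat P x y = x \<bullet> (P *\<^sub>v y)"

definition is_inner_product_mat :: "nat \<Rightarrow> real mat \<Rightarrow> bool" where
  "is_inner_product_mat n P \<longleftrightarrow> P \<in> carrier_mat n n \<and> P\<^sup>T = P \<and>
     (\<forall>x\<in>carrier_vec n. x \<noteq> 0\<^sub>v n \<longrightarrow> ip_mat P x x > 0)"

definition self_adjoint_wrt :: "nat \<Rightarrow> real mat \<Rightarrow> real mat \<Rightarrow> bool" where
  "self_adjoint_wrt n P B \<longleftrightarrow>
     (\<forall>x\<in>carrier_vec n. \<forall>y\<in>carrier_vec n. ip_mat P (B *\<^sub>v x) y = ip_mat P x (B *\<^sub>v y))"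

definition neg_semidef_wrt :: "nat \<Rightarrow> real mat \<Rightarrow> real mat \<Rightarrow> bool" where
  "neg_semidef_wrt n P B \<longleftrightarrow> (\<forall>x\<in>carrier_vec n. ip_mat P (B *\<^sub>v x) x \<le> 0)"

definition cspectrum :: "real mat \<Rightarrow> complex set" where
  "cspectrum A = spectrum (map_mat complex_of_real A)"

end

theory Submission
  imports Defs "Jordan_Normal_Form.DL_Submatrix"
begin

text \<open>
  Since \<open>F_i = v_i \<partial>L/\<partial>v_i\<close>, the Jacobian has entries
  \<open>\<delta>_ij \<partial>L/\<partial>v_i (w) + w_i \<partial>\<^sup>2L/\<partial>v_i\<partial>v_j (w)\<close>.
  At \<open>w \<in> \<Lambda>_S\<close> the row of an index \<open>i \<notin> S\<close> reduces to its diagonal entry, because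
  \<open>w_i = 0\<close>, while for \<open>i \<in> S\<close> the gradient term vanishes. So the spectrum of the Jacobian
  is made of these diagonal entries and the spectrum of the principal submatrix on \<open>S\<close>,
  which is \<open>D H\<close> with \<open>D = diag (w_i)\<close> positive and \<open>H = -(1/N) \<Sum>_I 1_I 1_I\<^sup>T / w_I\<^sup>2\<close>
  the Hessian of \<open>L\<close>, a negative semidefinite matrix. Such a product is self-adjoint and
  negative semidefinite for the inner product \<open>\<langle>x, y\<rangle> = \<Sum>_i x_i y_i / w_i\<close>, hence has
  real nonpositive eigenvalues.
\<close>

(* HOL-Analysis and Jordan_Normal_Form both write vector indexing as $; only the latter is used. *)
unbundle no vec_syntax

section \<open>Principal submatrices and spectra\<close>

(* pick S enumerates S in increasing order; submatrix indexes by it. *)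

lemma bij_betw_pick:
  assumes "finite S"
  shows "bij_betw (pick S) {..<card S} S"
proof -
  have inj: "inj_on (pick S) {..<card S}"
  proof (rule inj_onI)
    fix a b assume a: "a \<in> {..<card S}" and b: "b \<in> {..<card S}" and eq: "pick S a = pick S b"
    have "a = card {x \<in> S. x < pick S a}"
      using a by (simp add: card_pick)
    also have "\<dots> = b"
      using b by (simp add: eq card_pick)
    finally show "a = b" .
  qed
  have "pick S ` {..<card S} \<subseteq> S"
    using pick_in_set[where S = S] by auto
  then have "pick S ` {..<card S} = S"
    using assms inj by (intro card_subset_eq) (simp_all add: card_image)
  then show ?thesis
    using inj by (simp add: bij_betw_def)
qed

lemma pick_surj:
  assumes "finite S" "i \<in> S"
  obtains a where "a < card S" "pick S a = i"
proof -
  have "i \<in> pick S ` {..<card S}"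
    using bij_betw_pick[OF assms(1)] assms(2) by (simp add: bij_betw_def)
  then show ?thesis
    using that by blast
qed

lemma pick_less:
  assumes "S \<subseteq> {..<n}" "a < card S"
  shows "pick S a < n"
proof -
  have "pick S a \<in> S"
    using assms(2) by (simp add: pick_in_set)
  then show ?thesis
    using assms(1) by blast
qed

lemma sum_lessThan_pick:
  assumes "S \<subseteq> {..<n}" and "\<And>j. j < n \<Longrightarrow> j \<notin> S \<Longrightarrow> f j = 0"
  shows "(\<Sum>j<n. f j) = (\<Sum>b<card S. f (pick S b))"
proof -
  have "(\<Sum>j<n. f j) = (\<Sum>j\<in>S. f j)"
    by (rule sum.mono_neutral_right) (use assms in auto)
  also have "\<dots> = (\<Sum>b<card S. f (pick S b))"
    using bij_betw_pick[OF finite_subset[OF assms(1) finite_lessThan]] by (rule sum.reindex_bij_betw[symmetric])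
  finally show ?thesis .
qed

lemma principal_submatrix_carrier:
  assumes "A \<in> carrier_mat n n" "S \<subseteq> {..<n}"
  shows "submatrix A S S \<in> carrier_mat (card S) (card S)"
proof -
  have "{i. i < n \<and> i \<in> S} = S"
    using assms(2) by auto
  then show ?thesis
    using assms(1) by (intro carrier_matI) (auto simp: dim_submatrix)
qed

lemma principal_submatrix_index:
  assumes "A \<in> carrier_mat n n" "S \<subseteq> {..<n}" "a < card S" "b < card S"
  shows "submatrix A S S $$ (a, b) = A $$ (pick S a, pick S b)"
proof -
  have "{i. i < n \<and> i \<in> S} = S" using assms(2) by auto
  then show ?thesis using assms by (simp add: submatrix_index)
qed

lemma map_mat_submatrix:
  assumes "A \<in> carrier_mat n n" "S \<subseteq> {..<n}"
  shows "map_mat f (submatrix A S S) = submatrix (map_mat f A) S S"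
  using assms principal_submatrix_carrier[OF assms] principal_submatrix_carrier[of "map_mat f A" n S]
  by (intro eq_matI) (auto simp: principal_submatrix_index pick_less)

lemma eigenvalue_transpose_iff:
  assumes "(A :: 'a :: field mat) \<in> carrier_mat n n"
  shows "eigenvalue A\<^sup>T k \<longleftrightarrow> eigenvalue A k"
  using assms by (simp add: eigenvalue_root_char_poly[of _ n])

lemma eigenvalue_diagonal_entry_of_sparse_row:
  fixes A :: "'a :: field mat"
  assumes A: "A \<in> carrier_mat n n" and i: "i < n"
    and row: "\<And>j. j < n \<Longrightarrow> j \<noteq> i \<Longrightarrow> A $$ (i, j) = 0"
  shows "eigenvalue A (A $$ (i, i))"
proof -
  have "A\<^sup>T *\<^sub>v unit_vec n i = A $$ (i, i) \<cdot>\<^sub>v unit_vec n i"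
  proof (rule eq_vecI)
    fix j assume "j < dim_vec (A $$ (i, i) \<cdot>\<^sub>v unit_vec n i)"
    then have j: "j < n" by simp
    have "(A\<^sup>T *\<^sub>v unit_vec n i) $ j = A $$ (i, j)"
      using A i j by simp
    then show "(A\<^sup>T *\<^sub>v unit_vec n i) $ j = (A $$ (i, i) \<cdot>\<^sub>v unit_vec n i) $ j"
      using i j row[of j] by (cases "j = i") auto
  qed (use A in simp)
  then have "eigenvalue A\<^sup>T (A $$ (i, i))"
    unfolding eigenvalue_def eigenvector_def using A i by (intro exI[of _ "unit_vec n i"]) auto
  then show ?thesis using eigenvalue_transpose_iff[OF A] by blast
qed

lemma mult_mat_vec_index_sum:
  assumes "A \<in> carrier_mat n k" "v \<in> carrier_vec k" "i < n"
  shows "(A *\<^sub>v v) $ i = (\<Sum>j<k. A $$ (i, j) * v $ j)"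
  using assms by (auto simp: scalar_prod_def atLeast0LessThan intro: sum.cong)

lemma mult_mat_vec_sparse_row:
  assumes A: "A \<in> carrier_mat n n" and v: "v \<in> carrier_vec n" and i: "i < n"
    and row: "\<And>j. j < n \<Longrightarrow> j \<noteq> i \<Longrightarrow> A $$ (i, j) = 0"
  shows "(A *\<^sub>v v) $ i = A $$ (i, i) * v $ i"
proof -
  have "(A *\<^sub>v v) $ i = (\<Sum>j<n. if j = i then A $$ (i, i) * v $ i else 0)"
    unfolding mult_mat_vec_index_sum[OF A v i] by (rule sum.cong) (auto simp: row)
  also have "\<dots> = A $$ (i, i) * v $ i"
    using i by simp
  finally show ?thesis .
qed

definition subvec :: "nat set \<Rightarrow> 'a Matrix.vec \<Rightarrow> 'a Matrix.vec" where
  "subvec S v = vec (card S) (\<lambda>a. v $ pick S a)"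

(* card {a \<in> S. a < i} is the position of i in S, i.e. the inverse of pick S. *)
definition zero_extend :: "nat \<Rightarrow> nat set \<Rightarrow> 'a :: zero Matrix.vec \<Rightarrow> 'a Matrix.vec" where
  "zero_extend n S x = vec n (\<lambda>i. if i \<in> S then x $ card {a \<in> S. a < i} else 0)"

lemma zero_extend_pick:
  assumes "S \<subseteq> {..<n}" "a < card S"
  shows "zero_extend n S x $ pick S a = x $ a"
  using assms pick_less[OF assms] by (simp add: zero_extend_def pick_in_set card_pick)

lemma subvec_zero_extend:
  assumes "S \<subseteq> {..<n}" "x \<in> carrier_vec (card S)"
  shows "subvec S (zero_extend n S x) = x"
  using assms by (intro eq_vecI) (simp_all add: subvec_def zero_extend_pick)

lemma mult_mat_vec_supported_pick:
  fixes v :: "'a :: comm_semiring_0 Matrix.vec"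
  assumes A: "A \<in> carrier_mat n n" and S: "S \<subseteq> {..<n}" and v: "v \<in> carrier_vec n"
    and supp: "\<And>j. j < n \<Longrightarrow> j \<notin> S \<Longrightarrow> v $ j = 0" and a: "a < card S"
  shows "(A *\<^sub>v v) $ pick S a = (submatrix A S S *\<^sub>v subvec S v) $ a"
proof -
  have "(A *\<^sub>v v) $ pick S a = (\<Sum>j<n. A $$ (pick S a, j) * v $ j)"
    using A v pick_less[OF S a] by (rule mult_mat_vec_index_sum)
  also have "\<dots> = (\<Sum>b<card S. A $$ (pick S a, pick S b) * v $ pick S b)"
    using S supp by (intro sum_lessThan_pick) auto
  also have "\<dots> = (\<Sum>b<card S. submatrix A S S $$ (a, b) * subvec S v $ b)"
    using a by (intro sum.cong) (simp_all add: principal_submatrix_index[OF A S] subvec_def)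
  also have "\<dots> = (submatrix A S S *\<^sub>v subvec S v) $ a"
    using principal_submatrix_carrier[OF A S] a
    by (intro mult_mat_vec_index_sum[symmetric]) (simp_all add: subvec_def)
  finally show ?thesis .
qed

lemma nonzero_vec_index:
  assumes "v \<in> carrier_vec n" "v \<noteq> 0\<^sub>v n"
  obtains i where "i < n" "v $ i \<noteq> 0"
  using assms by (metis carrier_vecD eq_vecI index_zero_vec)

lemma eigenvector_subvec:
  fixes A :: "'a :: comm_ring_1 mat"
  assumes A: "A \<in> carrier_mat n n" and S: "S \<subseteq> {..<n}" and ev: "eigenvector A v z"
    and supp: "\<And>j. j < n \<Longrightarrow> j \<notin> S \<Longrightarrow> v $ j = 0"
  shows "eigenvector (submatrix A S S) (subvec S v) z"
proof -
  have v: "v \<in> carrier_vec n" and v0: "v \<noteq> 0\<^sub>v n" and Av: "A *\<^sub>v v = z \<cdot>\<^sub>v v"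
    using ev A unfolding eigenvector_def by auto
  have B: "submatrix A S S \<in> carrier_mat (card S) (card S)"
    using A S by (rule principal_submatrix_carrier)
  obtain i where i: "i < n" "v $ i \<noteq> 0"
    using v v0 by (rule nonzero_vec_index)
  then have "i \<in> S"
    using supp by blast
  then obtain a where a: "a < card S" "pick S a = i"
    using finite_subset[OF S finite_lessThan] pick_surj by metis
  have "subvec S v \<noteq> 0\<^sub>v (card S)"
  proof
    assume "subvec S v = 0\<^sub>v (card S)"
    then have "subvec S v $ a = 0" using a by simp
    then show False using a i by (simp add: subvec_def)
  qed
  moreover have "submatrix A S S *\<^sub>v subvec S v = z \<cdot>\<^sub>v subvec S v"
  proof (rule eq_vecI)
    fix b assume "b < dim_vec (z \<cdot>\<^sub>v subvec S v)"
    then have b: "b < card S" by (simp add: subvec_def)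
    have "(submatrix A S S *\<^sub>v subvec S v) $ b = (A *\<^sub>v v) $ pick S b"
      using mult_mat_vec_supported_pick[OF A S v supp b] by simp
    then show "(submatrix A S S *\<^sub>v subvec S v) $ b = (z \<cdot>\<^sub>v subvec S v) $ b"
      using Av b v pick_less[OF S b] by (simp add: subvec_def)
  qed (use B in \<open>simp add: subvec_def\<close>)
  ultimately show ?thesis
    using B unfolding eigenvector_def by (simp add: subvec_def)
qed

lemma eigenvector_zero_extend:
  fixes A :: "'a :: comm_ring_1 mat"
  assumes A: "A \<in> carrier_mat n n" and S: "S \<subseteq> {..<n}"
    and sparse: "\<And>i j. i < n \<Longrightarrow> j < n \<Longrightarrow> i \<notin> S \<Longrightarrow> j \<noteq> i \<Longrightarrow> A $$ (i, j) = 0"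
    and ev: "eigenvector (submatrix A S S) x z"
  shows "eigenvector A (zero_extend n S x) z"
proof -
  have B: "submatrix A S S \<in> carrier_mat (card S) (card S)"
    using A S by (rule principal_submatrix_carrier)
  have x: "x \<in> carrier_vec (card S)" and x0: "x \<noteq> 0\<^sub>v (card S)"
    and Bx: "submatrix A S S *\<^sub>v x = z \<cdot>\<^sub>v x"
    using ev B unfolding eigenvector_def by auto
  define v where "v = zero_extend n S x"
  have v: "v \<in> carrier_vec n" and supp: "\<And>j. j < n \<Longrightarrow> j \<notin> S \<Longrightarrow> v $ j = 0"
    by (auto simp: v_def zero_extend_def)
  have "v \<noteq> 0\<^sub>v n"
  proof
    assume v0: "v = 0\<^sub>v n"
    obtain a where a: "a < card S" "x $ a \<noteq> 0"
      using x x0 by (rule nonzero_vec_index)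
    then have "v $ pick S a = 0" using v0 pick_less[OF S a(1)] by simp
    then show False using a zero_extend_pick[OF S a(1), of x] by (simp add: v_def)
  qed
  moreover have "A *\<^sub>v v = z \<cdot>\<^sub>v v"
  proof (rule eq_vecI)
    fix i assume "i < dim_vec (z \<cdot>\<^sub>v v)"
    then have i: "i < n" using v by simp
    show "(A *\<^sub>v v) $ i = (z \<cdot>\<^sub>v v) $ i"
    proof (cases "i \<in> S")
      case True
      then obtain b where b: "b < card S" "i = pick S b"
        using finite_subset[OF S finite_lessThan] pick_surj by metis
      have "(A *\<^sub>v v) $ i = (submatrix A S S *\<^sub>v x) $ b"
        using mult_mat_vec_supported_pick[OF A S v supp b(1)] subvec_zero_extend[OF S x] b
        by (simp add: v_def)
      then show ?thesis
        using Bx b x i v zero_extend_pick[OF S b(1), of x] by (simp add: v_def)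
    next
      case False
      then show ?thesis
        using mult_mat_vec_sparse_row[OF A v i] sparse[OF i _ False] supp[OF i False] i v by simp
    qed
  qed (use A v in simp)
  ultimately show ?thesis
    using A v unfolding eigenvector_def v_def by simp
qed

lemma eigenvalue_iff_sparse_rows_or_principal_submatrix:
  fixes A :: "'a :: field mat"
  assumes A: "A \<in> carrier_mat n n" and S: "S \<subseteq> {..<n}"
    and sparse: "\<And>i j. i < n \<Longrightarrow> j < n \<Longrightarrow> i \<notin> S \<Longrightarrow> j \<noteq> i \<Longrightarrow> A $$ (i, j) = 0"
  shows "eigenvalue A z \<longleftrightarrow> (\<exists>i<n. i \<notin> S \<and> z = A $$ (i, i)) \<or> eigenvalue (submatrix A S S) z"
proof
  assume "eigenvalue A z"
  then obtain v where ev: "eigenvector A v z"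
    unfolding eigenvalue_def by blast
  then have v: "v \<in> carrier_vec n" and Av: "A *\<^sub>v v = z \<cdot>\<^sub>v v"
    using A unfolding eigenvector_def by auto
  show "(\<exists>i<n. i \<notin> S \<and> z = A $$ (i, i)) \<or> eigenvalue (submatrix A S S) z"
  proof (cases "\<exists>i<n. i \<notin> S \<and> v $ i \<noteq> 0")
    case True
    then obtain i where i: "i < n" "i \<notin> S" "v $ i \<noteq> 0" by blast
    have "A $$ (i, i) * v $ i = z * v $ i"
      using mult_mat_vec_sparse_row[OF A v i(1)] sparse[OF i(1) _ i(2)] Av i(1) v by auto
    then show ?thesis
      using i by auto
  next
    case False
    then have "eigenvector (submatrix A S S) (subvec S v) z"
      using A S ev by (intro eigenvector_subvec) auto
    then show ?thesis
      unfolding eigenvalue_def by blast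
  qed
next
  assume "(\<exists>i<n. i \<notin> S \<and> z = A $$ (i, i)) \<or> eigenvalue (submatrix A S S) z"
  then show "eigenvalue A z"
  proof
    assume "\<exists>i<n. i \<notin> S \<and> z = A $$ (i, i)"
    then show ?thesis
      using eigenvalue_diagonal_entry_of_sparse_row[OF A] sparse by blast
  next
    assume "eigenvalue (submatrix A S S) z"
    then show ?thesis
      using eigenvector_zero_extend[OF A S sparse] unfolding eigenvalue_def by blast
  qed
qed

section \<open>Positive diagonal matrix times a negative semidefinite matrix\<close>

definition bilinear_form :: "nat \<Rightarrow> (nat \<Rightarrow> nat \<Rightarrow> 'a) \<Rightarrow> (nat \<Rightarrow> 'a) \<Rightarrow> (nat \<Rightarrow> 'a) \<Rightarrow> 'a :: comm_semiring_0"
  where "bilinear_form k H x y = (\<Sum>a<k. \<Sum>b<k. x a * H a b * y b)"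

lemma bilinear_form_swap:
  assumes "\<And>a b. a < k \<Longrightarrow> b < k \<Longrightarrow> H a b = H b a"
  shows "bilinear_form k H x y = bilinear_form k H y x"
  unfolding bilinear_form_def using assms
  by (subst sum.swap) (auto intro!: sum.cong simp: mult_ac)

lemma bilinear_form_cnj_of_real:
  fixes H :: "nat \<Rightarrow> nat \<Rightarrow> real" and x :: "nat \<Rightarrow> complex"
  assumes sym: "\<And>a b. a < k \<Longrightarrow> b < k \<Longrightarrow> H a b = H b a"
  shows "bilinear_form k (\<lambda>a b. of_real (H a b)) (\<lambda>a. cnj (x a)) x =
    of_real (bilinear_form k H (\<lambda>a. Re (x a)) (\<lambda>a. Re (x a))
      + bilinear_form k H (\<lambda>a. Im (x a)) (\<lambda>a. Im (x a)))"
    (is "?lhs = of_real ?rhs")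
proof -
  let ?u = "\<lambda>a. Re (x a)" and ?v = "\<lambda>a. Im (x a)"
  have entry: "cnj (x a) * of_real (H a b) * x b =
      of_real (?u a * H a b * ?u b + ?v a * H a b * ?v b)
      + \<i> * of_real (?u a * H a b * ?v b - ?v a * H a b * ?u b)" for a b
    by (simp add: complex_eq_iff algebra_simps)
  have "?lhs = of_real ?rhs + \<i> * of_real (bilinear_form k H ?u ?v - bilinear_form k H ?v ?u)"
    unfolding bilinear_form_def entry
    by (simp add: sum.distrib sum_subtractf sum_distrib_left right_diff_distrib)
  also have "bilinear_form k H ?u ?v = bilinear_form k H ?v ?u"
    by (rule bilinear_form_swap[OF sym])
  finally show ?thesis
    by simp
qed

locale positive_diagonal_times_nsd =
  fixes k :: nat and d :: "nat \<Rightarrow> real" and H :: "nat \<Rightarrow> nat \<Rightarrow> real"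
  assumes d_pos: "\<And>a. a < k \<Longrightarrow> 0 < d a"
    and H_sym: "\<And>a b. a < k \<Longrightarrow> b < k \<Longrightarrow> H a b = H b a"
    and H_nsd: "\<And>x. bilinear_form k H x x \<le> 0"
begin

definition B :: "real mat" where
  "B = mat k k (\<lambda>(a, b). d a * H a b)"

definition P :: "real mat" where
  "P = mat k k (\<lambda>(a, b). if a = b then 1 / d a else 0)"

lemma d_nonzero: "a < k \<Longrightarrow> d a \<noteq> 0"
  using d_pos by force

lemma B_carrier: "B \<in> carrier_mat k k"
  by (simp add: B_def)

lemma B_mult_index:
  assumes "x \<in> carrier_vec k" "a < k"
  shows "(B *\<^sub>v x) $ a = d a * (\<Sum>b<k. H a b * x $ b)"
  using mult_mat_vec_index_sum[OF B_carrier assms] assms(2)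
  by (simp add: B_def sum_distrib_left mult.assoc)

lemma B_complex_mult_index:
  assumes "x \<in> carrier_vec k" "a < k"
  shows "(map_mat complex_of_real B *\<^sub>v x) $ a = of_real (d a) * (\<Sum>b<k. of_real (H a b) * x $ b)"
  using mult_mat_vec_index_sum[of "map_mat complex_of_real B" k k x a] B_carrier assms
  by (simp add: B_def sum_distrib_left mult.assoc)

lemma ip_mat_P:
  assumes "x \<in> carrier_vec k" "y \<in> carrier_vec k"
  shows "ip_mat P x y = (\<Sum>a<k. x $ a * y $ a / d a)"
proof -
  have "(P *\<^sub>v y) $ a = y $ a / d a" if a: "a < k" for a
  proof -
    have "(P *\<^sub>v y) $ a = (\<Sum>b<k. P $$ (a, b) * y $ b)"
      using assms(2) a by (intro mult_mat_vec_index_sum) (simp_all add: P_def)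
    also have "\<dots> = (\<Sum>b<k. if b = a then y $ a / d a else 0)"
      using a by (intro sum.cong) (auto simp: P_def)
    finally show ?thesis
      using a by simp
  qed
  then show ?thesis
    using assms by (simp add: ip_mat_def scalar_prod_def atLeast0LessThan P_def)
qed

lemma ip_mat_P_B_left:
  assumes "x \<in> carrier_vec k" "y \<in> carrier_vec k"
  shows "ip_mat P (B *\<^sub>v x) y = bilinear_form k H (($) y) (($) x)"
proof -
  have "ip_mat P (B *\<^sub>v x) y = (\<Sum>a<k. (B *\<^sub>v x) $ a * y $ a / d a)"
    using assms B_carrier by (intro ip_mat_P) auto
  also have "\<dots> = (\<Sum>a<k. \<Sum>b<k. y $ a * H a b * x $ b)"
    using assms(1)
    by (intro sum.cong) (simp_all add: B_mult_index d_nonzero sum_distrib_left sum_distrib_right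
        field_simps del: index_mult_mat_vec)
  finally show ?thesis
    by (simp add: bilinear_form_def)
qed

lemma ip_mat_P_B_right:
  assumes "x \<in> carrier_vec k" "y \<in> carrier_vec k"
  shows "ip_mat P x (B *\<^sub>v y) = bilinear_form k H (($) x) (($) y)"
proof -
  have "ip_mat P x (B *\<^sub>v y) = (\<Sum>a<k. x $ a * (B *\<^sub>v y) $ a / d a)"
    using assms B_carrier by (intro ip_mat_P) auto
  also have "\<dots> = (\<Sum>a<k. \<Sum>b<k. x $ a * H a b * y $ b)"
    using assms(2)
    by (intro sum.cong) (simp_all add: B_mult_index d_nonzero sum_distrib_left sum_distrib_right
        field_simps del: index_mult_mat_vec)
  finally show ?thesis
    by (simp add: bilinear_form_def)
qed

lemma P_inner_product: "is_inner_product_mat k P"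
  unfolding is_inner_product_mat_def
proof (intro conjI ballI impI)
  show "P \<in> carrier_mat k k"
    by (simp add: P_def)
  show "P\<^sup>T = P"
    by (rule eq_matI) (auto simp: P_def)
  fix x :: "real Matrix.vec" assume x: "x \<in> carrier_vec k" and "x \<noteq> 0\<^sub>v k"
  then obtain a where a: "a < k" "x $ a \<noteq> 0"
    by (rule nonzero_vec_index)
  have "0 < (\<Sum>b<k. (x $ b)\<^sup>2 / d b)"
  proof (rule sum_pos2[of _ a])
    show "0 < (x $ a)\<^sup>2 / d a"
      using a d_pos[OF a(1)] by simp
    show "0 \<le> (x $ b)\<^sup>2 / d b" if "b \<in> {..<k}" for b
      using d_pos[of b] that by simp
  qed (use a in auto)
  then show "0 < ip_mat P x x"
    using ip_mat_P[OF x x] by (simp add: power2_eq_square)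
qed

lemma B_self_adjoint: "self_adjoint_wrt k P B"
  unfolding self_adjoint_wrt_def
  using bilinear_form_swap[OF H_sym] by (simp add: ip_mat_P_B_left ip_mat_P_B_right)

lemma B_neg_semidef: "neg_semidef_wrt k P B"
  unfolding neg_semidef_wrt_def by (simp add: ip_mat_P_B_left H_nsd)

lemma cspectrum_B_nonpos_real:
  assumes "z \<in> cspectrum B"
  shows "Im z = 0 \<and> Re z \<le> 0"
proof -
  let ?Bc = "map_mat complex_of_real B"
  obtain x where x: "x \<in> carrier_vec k" and x0: "x \<noteq> 0\<^sub>v k" and Bx: "?Bc *\<^sub>v x = z \<cdot>\<^sub>v x"
    using assms B_carrier unfolding cspectrum_def spectrum_def eigenvalue_def eigenvector_def by auto
  define R where "R = (\<Sum>a<k. (cmod (x $ a))\<^sup>2 / d a)"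
  define T where "T = bilinear_form k H (\<lambda>a. Re (x $ a)) (\<lambda>a. Re (x $ a))
    + bilinear_form k H (\<lambda>a. Im (x $ a)) (\<lambda>a. Im (x $ a))"
  let ?Q = "\<Sum>a<k. cnj (x $ a) * (?Bc *\<^sub>v x) $ a / of_real (d a)"
  have entry: "cnj w * (z * w) / of_real r = z * of_real ((cmod w)\<^sup>2 / r)" for w r
    using complex_norm_square[of w] by (simp add: mult_ac)
  have "?Q = (\<Sum>a<k. z * of_real ((cmod (x $ a))\<^sup>2 / d a))"
    using Bx x by (intro sum.cong) (simp_all add: entry)
  then have QR: "?Q = z * of_real R"
    by (simp add: R_def sum_distrib_left)
  have "?Q = bilinear_form k (\<lambda>a b. of_real (H a b)) (\<lambda>a. cnj (x $ a)) (($) x)"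
    using x
    by (auto simp: d_nonzero B_complex_mult_index bilinear_form_def sum_distrib_left sum_divide_distrib
        mult_ac intro!: sum.cong)
  then have QT: "?Q = of_real T"
    unfolding T_def by (simp add: bilinear_form_cnj_of_real[OF H_sym])
  obtain a where a: "a < k" "x $ a \<noteq> 0"
    using x x0 by (rule nonzero_vec_index)
  have "R > 0"
    unfolding R_def
  proof (rule sum_pos2[of _ a])
    show "0 < (cmod (x $ a))\<^sup>2 / d a"
      using a d_pos[OF a(1)] by simp
    show "0 \<le> (cmod (x $ b))\<^sup>2 / d b" if "b \<in> {..<k}" for b
      using d_pos[of b] that by simp
  qed (use a in auto)
  moreover have "T \<le> 0"
    unfolding T_def using H_nsd by (simp add: add_nonpos_nonpos)
  moreover have "z = of_real (T / R)"
    using QR QT \<open>R > 0\<close> by (simp add: field_simps)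
  ultimately show ?thesis
    by (simp add: divide_nonpos_pos)
qed

end

section \<open>The Jacobian of F\<close>

lemma vsum_shift:
  "finite I \<Longrightarrow> vsum (\<lambda>k. v k + t * unitv j k) I = vsum v I + t * of_bool (j \<in> I)"
  unfolding vsum_def unitv_def by (simp add: sum.distrib flip: sum_distrib_left)

lemma pderiv_Ffun:
  assumes pos: "\<forall>I\<in>E. finite I \<and> 0 < vsum w I"
  shows "pderiv_at (Ffun m E i) j w = - unitv j i + (1 / real (card E)) *
    (\<Sum>I\<in>{I\<in>E. i \<in> I}. (unitv j i * vsum w I - w i * of_bool (j \<in> I)) / (vsum w I)\<^sup>2)"
proof -
  have F_line: "(\<lambda>t. Ffun m E i (\<lambda>k. w k + t * unitv j k)) = (\<lambda>t. - (w i + t * unitv j i)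
      + (1 / real (card E)) * (\<Sum>I\<in>{I\<in>E. i \<in> I}. (w i + t * unitv j i) / (vsum w I + t * of_bool (j \<in> I))))"
    unfolding Ffun_def using pos by (intro ext) (auto intro!: sum.cong simp: vsum_shift)
  have "((\<lambda>t. - (w i + t * unitv j i) + (1 / real (card E)) *
      (\<Sum>I\<in>{I\<in>E. i \<in> I}. (w i + t * unitv j i) / (vsum w I + t * of_bool (j \<in> I))))
    has_real_derivative (- unitv j i + (1 / real (card E)) *
      (\<Sum>I\<in>{I\<in>E. i \<in> I}. (unitv j i * vsum w I - w i * of_bool (j \<in> I)) / (vsum w I)\<^sup>2))) (at 0)"
    using pos by (intro derivative_eq_intros refl) (auto simp: power2_eq_square)
  then show ?thesis
    unfolding pderiv_at_def F_line by (rule DERIV_imp_deriv)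
qed

lemma dL_eq:
  assumes pos: "\<forall>I\<in>E. finite I \<and> 0 < vsum w I"
  shows "dL m E i w = - of_bool (i < m) + (1 / real (card E)) * (\<Sum>I\<in>E. of_bool (i \<in> I) / vsum w I)"
proof -
  have L_line: "(\<lambda>t. Lfun m E (\<lambda>k. w k + t * unitv i k)) = (\<lambda>t. - (vsum w {..<m} + t * of_bool (i < m))
      + (1 / real (card E)) * (\<Sum>I\<in>E. ln (vsum w I + t * of_bool (i \<in> I))))"
    unfolding Lfun_def using pos
    by (intro ext) (auto intro!: sum.cong simp: vsum_shift simp flip: vsum_def)
  have "((\<lambda>t. - (vsum w {..<m} + t * of_bool (i < m))
      + (1 / real (card E)) * (\<Sum>I\<in>E. ln (vsum w I + t * of_bool (i \<in> I))))
    has_real_derivative (- of_bool (i < m)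
      + (1 / real (card E)) * (\<Sum>I\<in>E. of_bool (i \<in> I) / vsum w I))) (at 0)"
    using pos by (intro derivative_eq_intros refl) auto
  then show ?thesis
    unfolding dL_def pderiv_at_def L_line by (rule DERIV_imp_deriv)
qed

definition hessian_L :: "nat set set \<Rightarrow> (nat \<Rightarrow> real) \<Rightarrow> nat \<Rightarrow> nat \<Rightarrow> real" where
  "hessian_L E v i j = - (1 / real (card E)) * (\<Sum>I\<in>E. of_bool (i \<in> I \<and> j \<in> I) / (vsum v I)\<^sup>2)"

lemma hessian_L_sym: "hessian_L E v i j = hessian_L E v j i"
  unfolding hessian_L_def by (simp add: conj_commute)

lemma JF_index:
  assumes fin: "finite E" and pos: "\<forall>I\<in>E. finite I \<and> 0 < vsum w I" and ij: "i < m" "j < m"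
  shows "JF m E w $$ (i, j) = of_bool (i = j) * dL m E i w + w i * hessian_L E w i j"
proof -
  define u where "u = unitv j i"
  have u: "u = of_bool (i = j)"
    unfolding u_def unitv_def by auto
  have "JF m E w $$ (i, j) = - u + (1 / real (card E)) *
      (\<Sum>I\<in>{I\<in>E. i \<in> I}. (u * vsum w I - w i * of_bool (j \<in> I)) / (vsum w I)\<^sup>2)"
    unfolding JF_def u_def using ij pderiv_Ffun[OF pos] by simp
  also have "(\<Sum>I\<in>{I\<in>E. i \<in> I}. (u * vsum w I - w i * of_bool (j \<in> I)) / (vsum w I)\<^sup>2)
      = u * (\<Sum>I\<in>E. of_bool (i \<in> I) / vsum w I)
        - w i * (\<Sum>I\<in>E. of_bool (i \<in> I \<and> j \<in> I) / (vsum w I)\<^sup>2)"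
    unfolding sum.inter_filter[OF fin] sum_distrib_left sum_subtractf[symmetric]
    using pos by (intro sum.cong) (auto simp: power2_eq_square field_simps)
  finally show ?thesis
    unfolding dL_eq[OF pos] hessian_L_def u using ij by (simp add: algebra_simps)
qed

lemma bilinear_form_hessian_L_nonpos:
  assumes "finite E"
  shows "bilinear_form k (\<lambda>a b. hessian_L E w (f a) (f b)) x x \<le> 0"
proof -
  let ?g = "\<lambda>I a. of_bool (f a \<in> I) * x a"
  have "bilinear_form k (\<lambda>a b. hessian_L E w (f a) (f b)) x x =
      - (1 / real (card E)) * (\<Sum>a<k. \<Sum>b<k. \<Sum>I\<in>E. ?g I a * ?g I b / (vsum w I)\<^sup>2)"
    by (simp add: bilinear_form_def hessian_L_def sum_distrib_left sum_divide_distrib of_bool_conj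
        mult_ac)
  also have "(\<Sum>a<k. \<Sum>b<k. \<Sum>I\<in>E. ?g I a * ?g I b / (vsum w I)\<^sup>2)
      = (\<Sum>a<k. \<Sum>I\<in>E. \<Sum>b<k. ?g I a * ?g I b / (vsum w I)\<^sup>2)"
    by (rule sum.cong[OF refl], rule sum.swap)
  also have "\<dots> = (\<Sum>I\<in>E. \<Sum>a<k. \<Sum>b<k. ?g I a * ?g I b / (vsum w I)\<^sup>2)"
    by (rule sum.swap)
  also have "\<dots> = (\<Sum>I\<in>E. (\<Sum>a<k. ?g I a)\<^sup>2 / (vsum w I)\<^sup>2)"
    by (simp only: power2_eq_square sum_product sum_divide_distrib)
  finally show ?thesis
    using assms by (simp add: sum_nonneg)
qed

section \<open>Spectrum of the Jacobian at a point of \<open>\<Lambda>\<^sub>S\<close>\<close>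

locale hypergraph_critical_point =
  fixes m :: nat and E :: "nat set set" and c :: real and S :: "nat set" and w :: "nat \<Rightarrow> real"
  assumes edges: "\<And>I. I \<in> E \<Longrightarrow> I \<subseteq> {..<m}"
    and c_pos: "0 < c"
    and S_sub: "S \<subseteq> {..<m}"
    and w_critical: "w \<in> Lambda_S m E c S"
begin

lemma finite_E: "finite E"
  using edges by (intro finite_subset[of E "Pow {..<m}"]) auto

lemma vsum_pos: "I \<in> E \<Longrightarrow> 0 < vsum w I"
  using w_critical c_pos unfolding Lambda_S_def Delta_S_def Delta_def by force

lemma edges_finite_pos: "\<forall>I\<in>E. finite I \<and> 0 < vsum w I"
  using edges vsum_pos by (meson finite_lessThan finite_subset)

lemma w_eq_0_iff: "i < m \<Longrightarrow> w i = 0 \<longleftrightarrow> i \<notin> S"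
  using w_critical unfolding Lambda_S_def Delta_S_def by auto

lemma w_nonneg: "i < m \<Longrightarrow> 0 \<le> w i"
  using w_critical unfolding Lambda_S_def Delta_S_def Delta_def by auto

lemma w_pos:
  assumes "i \<in> S"
  shows "0 < w i"
proof -
  have "i < m"
    using assms S_sub by blast
  then show ?thesis
    using assms w_nonneg w_eq_0_iff by (auto simp: order_less_le)
qed

lemma dL_vanishes: "i \<in> S \<Longrightarrow> dL m E i w = 0"
  using w_critical unfolding Lambda_S_def by auto

lemma JF_carrier: "JF m E w \<in> carrier_mat m m"
  by (simp add: JF_def)

lemma JF_index_outside:
  "i < m \<Longrightarrow> j < m \<Longrightarrow> i \<notin> S \<Longrightarrow> JF m E w $$ (i, j) = of_bool (i = j) * dL m E i w"
  using JF_index[OF finite_E edges_finite_pos] w_eq_0_iff by simp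

lemma JF_index_inside: "i \<in> S \<Longrightarrow> j < m \<Longrightarrow> JF m E w $$ (i, j) = w i * hessian_L E w i j"
  using JF_index[OF finite_E edges_finite_pos] dL_vanishes S_sub by auto

sublocale principal: positive_diagonal_times_nsd "card S" "\<lambda>a. w (pick S a)"
  "\<lambda>a b. hessian_L E w (pick S a) (pick S b)"
  by unfold_locales
    (auto simp: w_pos pick_in_set hessian_L_sym intro: bilinear_form_hessian_L_nonpos[OF finite_E])

lemma submatrix_JF: "submatrix (JF m E w) S S = principal.B"
  using principal_submatrix_carrier[OF JF_carrier S_sub]
  by (intro eq_matI) (auto simp: principal.B_def principal_submatrix_index[OF JF_carrier S_sub]
      JF_index_inside pick_in_set pick_less[OF S_sub])

lemma cspectrum_JF:
  "cspectrum (JF m E w) = {complex_of_real (dL m E i w) | i. i < m \<and> i \<notin> S} \<union> cspectrum principal.B"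
proof -
  let ?A = "map_mat complex_of_real (JF m E w)"
  have A: "?A \<in> carrier_mat m m"
    using JF_carrier by simp
  have sparse: "?A $$ (i, j) = 0" if "i < m" "j < m" "i \<notin> S" "j \<noteq> i" for i j
    using that JF_carrier by (simp add: JF_index_outside)
  have diagonal: "?A $$ (i, i) = of_real (dL m E i w)" if "i < m" "i \<notin> S" for i
    using that JF_carrier by (simp add: JF_index_outside)
  have sub: "submatrix ?A S S = map_mat complex_of_real principal.B"
    using map_mat_submatrix[OF JF_carrier S_sub, of complex_of_real] by (simp add: submatrix_JF)
  have "eigenvalue ?A z \<longleftrightarrow> (\<exists>i<m. i \<notin> S \<and> z = of_real (dL m E i w))
      \<or> eigenvalue (map_mat complex_of_real principal.B) z" for z
    using eigenvalue_iff_sparse_rows_or_principal_submatrix[OF A S_sub sparse, of z] sub diagonal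
    by auto
  then show ?thesis
    unfolding cspectrum_def spectrum_def by blast
qed

lemma positive_real_eigenvalue_iff:
  "(\<exists>r::real. 0 < r \<and> complex_of_real r \<in> cspectrum (JF m E w)) \<longleftrightarrow> (\<exists>i<m. w i = 0 \<and> dL m E i w > 0)"
  using cspectrum_JF principal.cspectrum_B_nonpos_real w_eq_0_iff by fastforce

end

theorem mainTheorem7:
  fixes m :: nat and E :: "nat set set" and c :: real and S :: "nat set" and w :: "nat \<Rightarrow> real"
  assumes E_ne: "E \<noteq> {}"
    and E_edges: "\<forall>I\<in>E. I \<noteq> {} \<and> I \<subseteq> {..<m}"
    and E_cover: "\<forall>i<m. \<exists>I\<in>E. i \<in> I"
    and c_pos: "0 < c" and c_lt: "c < 1 / real (card E)"
    and S_sub: "S \<subseteq> {..<m}"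
    and w_in: "w \<in> Lambda_S m E c S"
  shows "(\<forall>z\<in>cspectrum (JF m E w).
            (\<exists>i<m. i \<notin> S \<and> z = complex_of_real (dL m E i w))
            \<or> (Im z = 0 \<and> Re z \<le> 0))
       \<and> (\<exists>B P. B \<in> carrier_mat (card S) (card S)
            \<and> is_inner_product_mat (card S) P
            \<and> self_adjoint_wrt (card S) P B
            \<and> neg_semidef_wrt (card S) P B
            \<and> cspectrum (JF m E w) =
                 {complex_of_real (dL m E i w) | i. i < m \<and> i \<notin> S} \<union> cspectrum B)
       \<and> ((\<exists>r::real. 0 < r \<and> complex_of_real r \<in> cspectrum (JF m E w))
            \<longleftrightarrow> (\<exists>i<m. w i = 0 \<and> dL m E i w > 0))"
proof -
  interpret hypergraph_critical_point m E c S w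
    using E_edges c_pos S_sub w_in by unfold_locales auto
  show ?thesis
  proof (intro conjI)
    show "\<forall>z\<in>cspectrum (JF m E w).
        (\<exists>i<m. i \<notin> S \<and> z = complex_of_real (dL m E i w)) \<or> (Im z = 0 \<and> Re z \<le> 0)"
      using cspectrum_JF principal.cspectrum_B_nonpos_real by blast
    show "\<exists>B P. B \<in> carrier_mat (card S) (card S) \<and> is_inner_product_mat (card S) P
        \<and> self_adjoint_wrt (card S) P B \<and> neg_semidef_wrt (card S) P B
        \<and> cspectrum (JF m E w) = {complex_of_real (dL m E i w) | i. i < m \<and> i \<notin> S} \<union> cspectrum B"
      using principal.B_carrier principal.P_inner_product principal.B_self_adjoint
        principal.B_neg_semidef cspectrum_JF by blast
  qed (rule positive_real_eigenvalue_iff)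
qed

end
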